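(* Let $\Gamma$ be a countable group acting affinely on $\mathbb{R}^n$, let $\mathsf W\subseteq\mathbb{R}^n$ be a (not necessarily connected) open subset, and let $h:\mathsf W\to\mathbb{R}^n$ be a $C^1$ map preserving $\Gamma$-orbits (i.e. $h(x)\in\Gamma\cdot x$ for all $x$). Then for each $x\in\mathsf W$ there is $\gamma\in\Gamma$ such that $h$ and the map $y\mapsto\gamma\cdot y$ have the same germ at $x$.
   Context: Two maps have the same germ at $x$ if they agree on some neighbourhood of $x$. *)

theory Defs
  imports "HOL-Analysis.Analysis" "HOL-Algebra.Group_Action"
begin

definition affine_map :: "(real^'n \<Rightarrow> real^'n) \<Rightarrow> bool" where
  "affine_map f \<longleftrightarrow> (\<exists>L b. linear L \<and> (\<forall>x. f x = L x + b))"

definition C1_on :: "'a::euclidean_space set \<Rightarrow> ('a \<Rightarrow> 'b::real_normed_vector) \<Rightarrow> bool" where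
  "C1_on S f \<longleftrightarrow> (\<exists>D. (\<forall>x\<in>S. (f has_derivative blinfun_apply (D x)) (at x)) \<and> continuous_on S D)"

definition same_germ_at :: "'a::topological_space set \<Rightarrow> ('a \<Rightarrow> 'b) \<Rightarrow> ('a \<Rightarrow> 'b) \<Rightarrow> 'a \<Rightarrow> bool" where
  "same_germ_at S f g x \<longleftrightarrow> (\<exists>U. open U \<and> x \<in> U \<and> U \<subseteq> S \<and> (\<forall>y\<in>U. f y = g y))"

end

(*
  Let U be the open set of points at which h has the germ of one of the maps \<phi> g, and F = W - U;
  F is closed in W, hence a Baire space. By Baire, some ball B centred in F meets F only in points
  where h agrees with a single \<phi> \<gamma>. Every p in F \<inter> B then carries the 1-jet of some \<phi> g:
  if Dh p differs from the linear part of \<phi> \<gamma>, then h \<noteq> \<phi> \<gamma> on an open cone with vertex p; the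
  cone lies in U, carries a single germ by connectedness, and the jet of that germ passes to p by
  continuity of h and Dh. A second application of Baire yields a ball B' centred in F on which all
  points of F carry the jet of one \<phi> \<gamma>'. An affine map is determined by its 1-jet at a point, so
  connectedness of B' forces h = \<phi> \<gamma>' on B', and the centre of B' lies in U after all.
*)

theory Submission
  imports Defs
begin

lemma Baire_locally_closed:
  fixes \<Omega> F :: "'a::complete_space set" and C :: "'i \<Rightarrow> 'a set"
  assumes "open \<Omega>" and F: "closedin (top_of_set \<Omega>) F" "F \<noteq> {}" and "countable I"
    and closed: "\<And>i. i \<in> I \<Longrightarrow> closedin (top_of_set F) (C i)" and cover: "F \<subseteq> (\<Union>i\<in>I. C i)"
  obtains i y e where "i \<in> I" "y \<in> F" "e > 0" "ball y e \<subseteq> \<Omega>" "F \<inter> ball y e \<subseteq> C i"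
proof -
  have "F \<subseteq> \<Omega>"
    using F closedin_subset by fastforce
  have "completely_metrizable_space (top_of_set \<Omega>)"
    using completely_metrizable_space_openin[OF completely_metrizable_space_euclidean] \<open>open \<Omega>\<close>
    by simp
  then have complete: "completely_metrizable_space (top_of_set F)"
    using completely_metrizable_space_closedin[OF _ F(1)] \<open>F \<subseteq> \<Omega>\<close>
    by (simp add: subtopology_subtopology inf.absorb2)
  have "\<exists>i\<in>I. top_of_set F interior_of C i \<noteq> {}"
  proof (rule ccontr)
    assume "\<not> ?thesis"
    then have "top_of_set F interior_of \<Union>(C ` I) = {}"
      using complete \<open>countable I\<close> closed by (intro Baire_category_alt) auto
    moreover have "\<Union>(C ` I) = F"
      using cover closed closedin_subset by fastforce
    ultimately show False
      using F(2) by (simp add: interior_of_openin)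
  qed
  then obtain i y where "i \<in> I" and "y \<in> top_of_set F interior_of C i"
    by blast
  then obtain T where "openin (top_of_set F) T" "y \<in> T" "T \<subseteq> C i"
    unfolding interior_of_def by blast
  then obtain Z where "open Z" "T = F \<inter> Z"
    by (meson openin_open)
  then have "open (\<Omega> \<inter> Z)" "y \<in> \<Omega> \<inter> Z"
    using \<open>open \<Omega>\<close> \<open>y \<in> T\<close> \<open>F \<subseteq> \<Omega>\<close> by auto
  then obtain e where "e > 0" "ball y e \<subseteq> \<Omega> \<inter> Z"
    by (meson openE)
  then show ?thesis
    using that[OF \<open>i \<in> I\<close>] \<open>y \<in> T\<close> \<open>T = F \<inter> Z\<close> \<open>T \<subseteq> C i\<close> by blast
qed

lemma has_derivative_nonzero_near_ray:
  fixes k :: "'a::real_normed_vector \<Rightarrow> 'b::real_normed_vector"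
  assumes k: "(k has_derivative A) (at p)" and kp: "k p = 0" and Au: "A u \<noteq> 0" and "r > 0"
  obtains \<rho> \<delta> where "\<rho> > 0" "\<delta> > 0"
    "\<And>t v. 0 < t \<Longrightarrow> t < \<delta> \<Longrightarrow> v \<in> ball u \<rho> \<Longrightarrow> p + t *\<^sub>R v \<in> ball p r \<and> k (p + t *\<^sub>R v) \<noteq> 0"
proof -
  have lin: "bounded_linear A"
    using k has_derivative_bounded_linear by blast
  obtain K where "K > 0" and K: "\<And>x. norm (A x) \<le> norm x * K"
    using lin bounded_linear.pos_bounded by blast
  define a where "a = norm (A u)"
  define c where "c = norm u"
  \<comment> \<open>Chosen so that at \<open>p + t *\<^sub>R v\<close> with \<open>v \<in> ball u \<rho>\<close> the linear term has norm
    at least \<open>3 * a * t / 4\<close> and the remainder at most \<open>a * t / 4\<close>.\<close>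
  define \<rho> where "\<rho> = a / (4 * K)"
  define \<epsilon> where "\<epsilon> = a / (4 * (c + \<rho>))"
  have "a > 0" "c > 0"
    using Au lin linear_simps(3)[of A] unfolding a_def c_def by (auto simp: bounded_linear.linear)
  then have "\<rho> > 0"
    using \<open>K > 0\<close> unfolding \<rho>_def by auto
  then have "\<epsilon> > 0"
    using \<open>a > 0\<close> \<open>c > 0\<close> unfolding \<epsilon>_def by auto
  then obtain d where "d > 0"
    and approx: "\<And>y. norm (y - p) < d \<Longrightarrow> norm (k y - A (y - p)) \<le> \<epsilon> * norm (y - p)"
    using k kp unfolding has_derivative_at_alt by force
  define \<delta> where "\<delta> = min d r / (c + \<rho>)"
  have "\<delta> > 0"
    using \<open>d > 0\<close> \<open>r > 0\<close> \<open>c > 0\<close> \<open>\<rho> > 0\<close> unfolding \<delta>_def by simp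
  have on_ray: "p + t *\<^sub>R v \<in> ball p r \<and> k (p + t *\<^sub>R v) \<noteq> 0"
    if t: "0 < t" "t < \<delta>" and v: "v \<in> ball u \<rho>" for t v
  proof -
    define q where "q = p + t *\<^sub>R v"
    have "norm (v - u) < \<rho>"
      using v by (simp add: dist_norm norm_minus_commute)
    then have "norm v < c + \<rho>"
      using norm_triangle_sub[of v u] unfolding c_def by linarith
    then have "t * norm v \<le> t * (c + \<rho>)"
      using t by simp
    moreover have "t * (c + \<rho>) < min d r"
      using t \<open>c > 0\<close> \<open>\<rho> > 0\<close> unfolding \<delta>_def by (simp add: field_simps)
    moreover have "norm (q - p) = t * norm v"
      using t unfolding q_def by simp
    ultimately have qp: "norm (q - p) < min d r" "norm (q - p) \<le> t * (c + \<rho>)"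
      by linarith+
    have "norm (k q - t *\<^sub>R A v) \<le> \<epsilon> * norm (q - p)"
      using approx[of q] qp lin unfolding q_def by (simp add: linear_simps)
    also have "\<dots> \<le> \<epsilon> * (t * (c + \<rho>))"
      using qp \<open>\<epsilon> > 0\<close> by simp
    also have "\<dots> = t * a / 4"
      using \<open>c > 0\<close> \<open>\<rho> > 0\<close> unfolding \<epsilon>_def by (simp add: field_simps)
    finally have remainder: "norm (k q - t *\<^sub>R A v) \<le> t * a / 4" .
    have "norm (A (v - u)) \<le> \<rho> * K"
      using K[of "v - u"] \<open>norm (v - u) < \<rho>\<close> \<open>K > 0\<close>
      by (smt (verit, best) mult_right_mono)
    then have "norm (A v) \<ge> 3 * a / 4"
      using norm_triangle_sub[of "A u" "A v"] lin \<open>K > 0\<close>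
      unfolding a_def \<rho>_def by (simp add: linear_simps norm_minus_commute)
    then have "norm (t *\<^sub>R A v) \<ge> t * (3 * a / 4)"
      using t by (simp add: mult_left_mono)
    then have "norm (k q) \<ge> t * a / 2"
      using remainder norm_triangle_sub[of "t *\<^sub>R A v" "k q"] by (simp add: norm_minus_commute)
    then show ?thesis
      using mult_pos_pos[OF t(1) \<open>a > 0\<close>] qp unfolding q_def[symmetric]
      by (auto simp: dist_norm norm_minus_commute)
  qed
  show ?thesis
    using \<open>\<rho> > 0\<close> \<open>\<delta> > 0\<close> on_ray by (rule that)
qed

lemma has_derivative_nonzero_on_cone:
  fixes k :: "'a::real_normed_vector \<Rightarrow> 'b::real_normed_vector"
  assumes k: "(k has_derivative A) (at p)" and "k p = 0" and "A \<noteq> (\<lambda>v. 0)" and "r > 0"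
  obtains C where "open C" "connected C" "C \<subseteq> ball p r" "p \<in> closure C" "\<forall>q\<in>C. k q \<noteq> 0"
proof -
  obtain u where "A u \<noteq> 0"
    using assms(3) by auto
  then obtain \<rho> \<delta> where "\<rho> > 0" "\<delta> > 0" and on_ray:
    "\<And>t v. 0 < t \<Longrightarrow> t < \<delta> \<Longrightarrow> v \<in> ball u \<rho> \<Longrightarrow> p + t *\<^sub>R v \<in> ball p r \<and> k (p + t *\<^sub>R v) \<noteq> 0"
    using has_derivative_nonzero_near_ray[OF k \<open>k p = 0\<close> _ \<open>r > 0\<close>] by blast
  define C where "C = (\<Union>t\<in>{0<..<\<delta>}. (\<lambda>v. p + t *\<^sub>R v) ` ball u \<rho>)"
  show ?thesis
  proof
    show "open C"
      unfolding C_def by (intro open_UN ballI open_affinity) auto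
    have "C = (\<lambda>(t, v). p + t *\<^sub>R v) ` ({0<..<\<delta>} \<times> ball u \<rho>)"
      unfolding C_def by auto
    then show "connected C"
      by (auto intro!: connected_continuous_image connected_Times continuous_intros
          simp: split_def)
    show "C \<subseteq> ball p r" "\<forall>q\<in>C. k q \<noteq> 0"
      using on_ray unfolding C_def by auto
    have "((\<lambda>t. p + t *\<^sub>R u) \<longlongrightarrow> p) (at_right 0)"
      by (auto intro!: tendsto_eq_intros)
    moreover have "p + t *\<^sub>R u \<in> C" if "0 < t" "t < \<delta>" for t
      using that \<open>\<rho> > 0\<close> unfolding C_def by (intro UN_I[of t] imageI) auto
    then have "\<forall>\<^sub>F t in at_right 0. p + t *\<^sub>R u \<in> closure C"
      unfolding eventually_at_right_field using \<open>\<delta> > 0\<close> closure_subset by blast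
    ultimately show "p \<in> closure C"
      by (intro Lim_in_closed_set) auto
  qed
qed

locale pointwise_affine_C1 =
  fixes I :: "'i set"
    and \<phi> :: "'i \<Rightarrow> 'a::banach \<Rightarrow> 'b::real_normed_vector"
    and W :: "'a set"
    and h :: "'a \<Rightarrow> 'b"
    and Dh :: "'a \<Rightarrow> 'a \<Rightarrow>\<^sub>L 'b"
  assumes countable_I: "countable I"
    and affine: "\<And>i. i \<in> I \<Longrightarrow> \<exists>L c. bounded_linear L \<and> (\<forall>x. \<phi> i x = L x + c)"
    and open_W: "open W"
    and has_derivative_h: "\<And>x. x \<in> W \<Longrightarrow> (h has_derivative blinfun_apply (Dh x)) (at x)"
    and continuous_Dh: "continuous_on W Dh"
    and pointwise: "\<And>x. x \<in> W \<Longrightarrow> \<exists>i\<in>I. h x = \<phi> i x"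
begin

definition linear_part :: "'i \<Rightarrow> 'a \<Rightarrow> 'b" where
  "linear_part i v = \<phi> i v - \<phi> i 0"

lemma
  assumes "i \<in> I"
  shows bounded_linear_linear_part: "bounded_linear (linear_part i)"
    and affine_eq: "\<phi> i x = linear_part i x + \<phi> i 0"
proof -
  obtain L c where L: "bounded_linear L" and \<phi>: "\<And>x. \<phi> i x = L x + c"
    using affine[OF assms] by blast
  then have "linear_part i = L"
    by (auto simp: linear_part_def \<phi> linear_simps)
  then show "bounded_linear (linear_part i)" "\<phi> i x = linear_part i x + \<phi> i 0"
    using L by (simp_all add: \<phi> linear_simps)
qed

lemma has_derivative_\<phi>:
  assumes "i \<in> I"
  shows "(\<phi> i has_derivative linear_part i) (at x)"
proof -
  have "\<phi> i = (\<lambda>x. linear_part i x + \<phi> i 0)"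
    by (rule ext) (rule affine_eq[OF assms])
  then show ?thesis
    using bounded_linear_linear_part[OF assms]
    by (metis add_0_right bounded_linear_imp_has_derivative has_derivative_add_const)
qed

lemma continuous_on_\<phi>: "i \<in> I \<Longrightarrow> continuous_on S (\<phi> i)"
  by (meson has_derivative_\<phi> continuous_at_imp_continuous_on has_derivative_continuous)

lemma continuous_on_h: "continuous_on W h"
  using has_derivative_h has_derivative_continuous continuous_at_imp_continuous_on by blast

definition same_jet :: "'i \<Rightarrow> 'a \<Rightarrow> bool" where
  "same_jet i z \<longleftrightarrow> h z = \<phi> i z \<and> Dh z = Blinfun (linear_part i)"

definition germ_points :: "'a set" where
  "germ_points = {z \<in> W. \<exists>i\<in>I. same_germ_at W h (\<phi> i) z}"

lemma open_germ_points: "open germ_points"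
proof (unfold open_subopen[of germ_points], intro ballI)
  fix z
  assume "z \<in> germ_points"
  then obtain i U where "i \<in> I" "open U" "z \<in> U" "U \<subseteq> W" "\<forall>y\<in>U. h y = \<phi> i y"
    unfolding germ_points_def same_germ_at_def by blast
  then have "U \<subseteq> germ_points"
    unfolding germ_points_def same_germ_at_def by blast
  then show "\<exists>T. open T \<and> z \<in> T \<and> T \<subseteq> germ_points"
    using \<open>open U\<close> \<open>z \<in> U\<close> by blast
qed

lemma same_jet_if_same_germ:
  assumes "i \<in> I" and "same_germ_at W h (\<phi> i) z"
  shows "same_jet i z"
proof -
  obtain V where V: "open V" "z \<in> V" "V \<subseteq> W" "\<And>y. y \<in> V \<Longrightarrow> h y = \<phi> i y"
    using assms(2) unfolding same_germ_at_def by blast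
  then have "(h has_derivative linear_part i) (at z)"
    using has_derivative_transform_within_open[OF has_derivative_\<phi>[OF assms(1)]] by metis
  then have "blinfun_apply (Dh z) = linear_part i"
    using has_derivative_unique has_derivative_h V by blast
  then show ?thesis
    unfolding same_jet_def using V by (metis blinfun_apply_inverse)
qed

lemma same_jet_unique:
  assumes "i \<in> I" "j \<in> I" and "same_jet i z" "same_jet j z"
  shows "\<phi> i = \<phi> j"
proof -
  have "linear_part i = linear_part j"
    using assms bounded_linear_Blinfun_apply bounded_linear_linear_part
    unfolding same_jet_def by metis
  moreover have "linear_part i z + \<phi> i 0 = linear_part j z + \<phi> j 0"
    using assms(3,4) unfolding same_jet_def affine_eq[OF assms(1), symmetric]
      affine_eq[OF assms(2), symmetric] by simp
  ultimately have "\<phi> i 0 = \<phi> j 0"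
    by simp
  show ?thesis
  proof
    fix x
    have "\<phi> i x = linear_part i x + \<phi> i 0"
      by (rule affine_eq[OF assms(1)])
    also have "\<dots> = linear_part j x + \<phi> j 0"
      using \<open>linear_part i = linear_part j\<close> \<open>\<phi> i 0 = \<phi> j 0\<close> by simp
    also have "\<dots> = \<phi> j x"
      by (rule affine_eq[OF assms(2), symmetric])
    finally show "\<phi> i x = \<phi> j x" .
  qed
qed

lemma closedin_agree:
  assumes "i \<in> I" "S \<subseteq> W"
  shows "closedin (top_of_set S) {z \<in> S. h z = \<phi> i z}"
proof -
  have "continuous_on S (\<lambda>z. h z - \<phi> i z)"
    using continuous_on_h continuous_on_\<phi> assms
    by (intro continuous_intros) (auto intro: continuous_on_subset)
  from continuous_closedin_preimage_constant[OF this, of 0] show ?thesis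
    by simp
qed

lemma closedin_same_jet:
  assumes "i \<in> I" "S \<subseteq> W"
  shows "closedin (top_of_set S) {z \<in> S. same_jet i z}"
proof -
  have "continuous_on S (\<lambda>z. (h z - \<phi> i z, Dh z))"
    using continuous_on_h continuous_Dh continuous_on_\<phi> assms
    by (intro continuous_intros) (auto intro: continuous_on_subset)
  from continuous_closedin_preimage_constant[OF this, of "(0, Blinfun (linear_part i))"]
  show ?thesis
    by (simp add: same_jet_def)
qed

lemma same_jet_propagates:
  assumes C: "open C" "connected C" "C \<subseteq> W" and "i \<in> I" "x \<in> C" "same_jet i x"
    and germ: "\<And>z. z \<in> C \<Longrightarrow> same_jet i z \<Longrightarrow> z \<in> germ_points"
  shows "\<forall>z\<in>C. same_jet i z"
proof -
  let ?Q = "{z \<in> C. same_jet i z}"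
  have "open ?Q"
  proof (unfold open_subopen[of ?Q], intro ballI)
    fix z
    assume z: "z \<in> ?Q"
    then obtain j V where "j \<in> I" "open V" "z \<in> V" "V \<subseteq> W" "\<forall>y\<in>V. h y = \<phi> j y"
      using germ unfolding germ_points_def same_germ_at_def by blast
    then have jet_j: "same_jet j y" if "y \<in> V" for y
      using that same_jet_if_same_germ unfolding same_germ_at_def by blast
    then have "\<phi> j = \<phi> i"
      using same_jet_unique \<open>j \<in> I\<close> \<open>i \<in> I\<close> z \<open>z \<in> V\<close> by blast
    then have "V \<inter> C \<subseteq> ?Q"
      using jet_j unfolding same_jet_def linear_part_def by auto
    then show "\<exists>T. open T \<and> z \<in> T \<and> T \<subseteq> ?Q"
      using \<open>open V\<close> \<open>z \<in> V\<close> z C(1) by blast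
  qed
  then have "openin (top_of_set C) ?Q"
    by (auto intro: open_subset)
  moreover have "closedin (top_of_set C) ?Q"
    using closedin_same_jet \<open>i \<in> I\<close> C(3) by blast
  ultimately have "?Q = {} \<or> ?Q = C"
    using C(2) connected_clopen by blast
  then show ?thesis
    using \<open>x \<in> C\<close> \<open>same_jet i x\<close> by blast
qed

lemma same_jet_at_cone_vertex:
  assumes "\<gamma> \<in> I" "r > 0" "ball p r \<subseteq> W" "h p = \<phi> \<gamma> p"
    and agree: "\<forall>q\<in>ball p r - germ_points. h q = \<phi> \<gamma> q"
  shows "\<exists>i\<in>I. same_jet i p"
proof (cases "Dh p = Blinfun (linear_part \<gamma>)")
  case True
  then show ?thesis
    using assms unfolding same_jet_def by blast
next
  case False
  have "p \<in> W"
    using assms(2,3) by auto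
  have deriv: "((\<lambda>q. h q - \<phi> \<gamma> q) has_derivative (\<lambda>v. Dh p v - linear_part \<gamma> v)) (at p)"
    using has_derivative_h[OF \<open>p \<in> W\<close>] has_derivative_\<phi>[OF \<open>\<gamma> \<in> I\<close>] by (rule has_derivative_diff)
  have nonzero: "(\<lambda>v. Dh p v - linear_part \<gamma> v) \<noteq> (\<lambda>v. 0)"
  proof
    assume "(\<lambda>v. Dh p v - linear_part \<gamma> v) = (\<lambda>v. 0)"
    then have "blinfun_apply (Dh p) = linear_part \<gamma>"
      by (simp add: fun_eq_iff)
    then show False
      using False blinfun_apply_inverse[of "Dh p"] by simp
  qed
  have "h p - \<phi> \<gamma> p = 0"
    using assms(4) by simp
  then obtain C where C: "open C" "connected C" "C \<subseteq> ball p r" "p \<in> closure C"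
    and disagree: "\<forall>q\<in>C. h q - \<phi> \<gamma> q \<noteq> 0"
    using has_derivative_nonzero_on_cone[OF deriv _ nonzero \<open>r > 0\<close>] by blast
  have "C \<subseteq> W" "C \<subseteq> germ_points"
    using C(3) assms(3) agree disagree by force+
  obtain x where "x \<in> C"
    using C(4) by fastforce
  then obtain i where "i \<in> I" "same_germ_at W h (\<phi> i) x"
    using \<open>C \<subseteq> germ_points\<close> unfolding germ_points_def by blast
  then have "\<forall>z\<in>C. same_jet i z"
    using same_jet_propagates[OF C(1,2) \<open>C \<subseteq> W\<close> _ \<open>x \<in> C\<close>] same_jet_if_same_germ \<open>C \<subseteq> germ_points\<close>
    by blast
  moreover obtain T where "closed T" "{z \<in> W. same_jet i z} = W \<inter> T"
    using closedin_same_jet[OF \<open>i \<in> I\<close> order_refl] unfolding closedin_closed by blast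
  ultimately have "closure C \<subseteq> T"
    using \<open>C \<subseteq> W\<close> by (intro closure_minimal) auto
  then show ?thesis
    using C(4) \<open>p \<in> W\<close> \<open>i \<in> I\<close> \<open>{z \<in> W. same_jet i z} = W \<inter> T\<close> by blast
qed

lemma germ_point_if_same_jet_off_germ_points:
  assumes "\<gamma> \<in> I" "e > 0" "ball c e \<subseteq> W"
    and jet: "\<forall>z\<in>ball c e - germ_points. same_jet \<gamma> z"
  shows "c \<in> germ_points"
proof (rule ccontr)
  assume c: "c \<notin> germ_points"
  have "h x = \<phi> \<gamma> x" if x: "x \<in> ball c e" for x
  proof (cases "x \<in> germ_points")
    case False
    then show ?thesis
      using jet x unfolding same_jet_def by blast
  next
    case True
    then obtain i where "i \<in> I" "same_germ_at W h (\<phi> i) x"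
      unfolding germ_points_def by blast
    then have "same_jet i x"
      by (rule same_jet_if_same_germ)
    \<comment> \<open>Otherwise the jet of \<open>\<phi> i\<close> would spread over the whole ball, up to the non-germ point c.\<close>
    have "\<exists>z\<in>ball c e - germ_points. same_jet i z"
    proof (rule ccontr)
      assume none: "\<not> ?thesis"
      then have "\<forall>z\<in>ball c e. same_jet i z"
        using same_jet_propagates[OF open_ball convex_connected[OF convex_ball] assms(3)
            \<open>i \<in> I\<close> x \<open>same_jet i x\<close>] by blast
      then show False
        using none c \<open>e > 0\<close> by simp
    qed
    then have "\<phi> i = \<phi> \<gamma>"
      using same_jet_unique \<open>i \<in> I\<close> \<open>\<gamma> \<in> I\<close> jet by blast
    then show ?thesis
      using \<open>same_jet i x\<close> unfolding same_jet_def by simp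
  qed
  then have "same_germ_at W h (\<phi> \<gamma>) c"
    unfolding same_germ_at_def using assms(2,3) by (intro exI[of _ "ball c e"]) auto
  moreover have "c \<in> W"
    using assms(2,3) by auto
  ultimately show False
    using c \<open>\<gamma> \<in> I\<close> unfolding germ_points_def by blast
qed

lemma Baire_non_germ_points:
  assumes "open \<Omega>" "\<Omega> - germ_points \<noteq> {}"
    and closed: "\<And>i. i \<in> I \<Longrightarrow> closedin (top_of_set (\<Omega> - germ_points)) {z \<in> \<Omega> - germ_points. P i z}"
    and cover: "\<And>z. z \<in> \<Omega> - germ_points \<Longrightarrow> \<exists>i\<in>I. P i z"
  obtains \<gamma> y e where "\<gamma> \<in> I" "y \<in> \<Omega> - germ_points" "e > 0" "ball y e \<subseteq> \<Omega>"
    and "\<forall>z\<in>ball y e - germ_points. P \<gamma> z"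
proof -
  have "closedin (top_of_set \<Omega>) (\<Omega> - germ_points)"
    unfolding Diff_eq by (rule closedin_closed_Int) (rule closed_Compl[OF open_germ_points])
  moreover have "\<Omega> - germ_points \<subseteq> (\<Union>i\<in>I. {z \<in> \<Omega> - germ_points. P i z})"
    using cover by blast
  ultimately obtain \<gamma> y e where "\<gamma> \<in> I" "y \<in> \<Omega> - germ_points" "e > 0" "ball y e \<subseteq> \<Omega>"
    and "(\<Omega> - germ_points) \<inter> ball y e \<subseteq> {z \<in> \<Omega> - germ_points. P \<gamma> z}"
    using Baire_locally_closed[OF \<open>open \<Omega>\<close> _ \<open>\<Omega> - germ_points \<noteq> {}\<close> countable_I,
        of "\<lambda>i. {z \<in> \<Omega> - germ_points. P i z}"] closed by blast
  then show ?thesis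
    using that by blast
qed

theorem exists_same_germ:
  assumes "x \<in> W"
  shows "\<exists>i\<in>I. same_germ_at W h (\<phi> i) x"
proof -
  have "W - germ_points = {}"
  proof (rule ccontr)
    assume "W - germ_points \<noteq> {}"
    moreover have "closedin (top_of_set (W - germ_points)) {z \<in> W - germ_points. h z = \<phi> i z}"
      if "i \<in> I" for i
      using closedin_agree that by blast
    moreover have "\<exists>i\<in>I. h z = \<phi> i z" if "z \<in> W - germ_points" for z
      using pointwise that by blast
    ultimately obtain \<gamma> y e where "\<gamma> \<in> I" "y \<in> W - germ_points" "e > 0" "ball y e \<subseteq> W"
      and agree: "\<forall>z\<in>ball y e - germ_points. h z = \<phi> \<gamma> z"
      using Baire_non_germ_points[OF open_W, of "\<lambda>i z. h z = \<phi> i z"] by blast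
    have "ball y e - germ_points \<noteq> {}"
      using \<open>y \<in> W - germ_points\<close> centre_in_ball[of y e] \<open>e > 0\<close> by blast
    moreover have "closedin (top_of_set (ball y e - germ_points))
        {z \<in> ball y e - germ_points. same_jet i z}" if "i \<in> I" for i
      using closedin_same_jet that \<open>ball y e \<subseteq> W\<close> by blast
    moreover have "\<exists>i\<in>I. same_jet i p" if p: "p \<in> ball y e - germ_points" for p
    proof -
      obtain r where "r > 0" "ball p r \<subseteq> ball y e"
        using p openE[OF open_ball] by blast
      then show ?thesis
        using same_jet_at_cone_vertex[OF \<open>\<gamma> \<in> I\<close> \<open>r > 0\<close>] agree p \<open>ball y e \<subseteq> W\<close> by blast
    qed
    ultimately obtain \<gamma>' y' e' where "\<gamma>' \<in> I" "y' \<in> ball y e - germ_points" "e' > 0"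
      "ball y' e' \<subseteq> ball y e" "\<forall>z\<in>ball y' e' - germ_points. same_jet \<gamma>' z"
      using Baire_non_germ_points[OF open_ball, of y e same_jet] by blast
    then show False
      using germ_point_if_same_jet_off_germ_points \<open>ball y e \<subseteq> W\<close> by blast
  qed
  then show ?thesis
    using assms unfolding germ_points_def by blast
qed

end

theorem corollary1:
  fixes G :: "('g, 'b) monoid_scheme"
    and \<phi> :: "'g \<Rightarrow> real^'n \<Rightarrow> real^'n"
    and W :: "(real^'n) set"
    and h :: "real^'n \<Rightarrow> real^'n"
  assumes "group_action G UNIV \<phi>"
    and "countable (carrier G)"
    and "\<forall>g\<in>carrier G. affine_map (\<phi> g)"
    and "open W"
    and "C1_on W h"
    and "\<forall>x\<in>W. h x \<in> orbit G \<phi> x"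
  shows "\<forall>x\<in>W. \<exists>g\<in>carrier G. same_germ_at W h (\<phi> g) x"
proof -
  obtain Dh where "\<forall>x\<in>W. (h has_derivative blinfun_apply (Dh x)) (at x)" "continuous_on W Dh"
    using assms(5) unfolding C1_on_def by blast
  then interpret pointwise_affine_C1 "carrier G" \<phi> W h Dh
  proof unfold_locales
    show "\<exists>L c. bounded_linear L \<and> (\<forall>x. \<phi> g x = L x + c)" if "g \<in> carrier G" for g
      using assms(3) that linear_conv_bounded_linear unfolding affine_map_def by blast
    show "\<exists>g\<in>carrier G. h x = \<phi> g x" if "x \<in> W" for x
      using assms(6) that unfolding orbit_def by blast
  qed (use assms in auto)
  show ?thesis
    using exists_same_germ by blast
qed

end
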